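(* Let $\mathfrak{U}$ be a Banach algebra such that $\mathfrak{U}^\sharp$ is symmetrically pseudo-amenable, and let $X$ be a Banach $\mathfrak{U}$-bimodule. Then every bounded central Jordan derivation $D:\mathfrak{U}\to X$ (i.e. $D(\mathfrak{U})\subseteq\mathcal{Z}_{\mathfrak{U}}(X)$) is a derivation.
   Context: $\mathfrak{U}^\sharp=\mathfrak{U}\oplus\mathbb{C}1$ is the unitization of $\mathfrak{U}$ with the $\ell^1$-norm (a unit is adjoined even if $\mathfrak{U}$ is unital). $\mathcal{Z}_{\mathfrak{U}}(X)=\{x\in X: ax=xa \text{ for all } a\in\mathfrak{U}\}$. A linear map $\delta:\mathfrak{U}\to X$ is a derivation if $\delta(ab)=\delta(a)b+a\delta(b)$, and a Jordan derivation if $\delta(ab+ba)=\delta(a)b+a\delta(b)+\delta(b)a+b\delta(a)$, for all $a,b$. For a Banach algebra $\mathfrak{A}$, $\mathfrak{A}\widehat{\otimes}\mathfrak{A}$ is the projective tensor product with $a(b\otimes c)=ab\otimes c$, $(b\otimes c)a=b\otimes ca$, $\pi(b\otimes c)=bc$ (extended linearly and continuously); the flip is $(b\otimes c)^\circ=c\otimes b$ and $\mathbf{t}$ is symmetric if $\mathbf{t}^\circ=\mathbf{t}$. A symmetric approximate diagonal is a net $\{\mathbf{t}_\lambda\}$ (not necessarily bounded) of symmetric elements with $a\mathbf{t}_\lambda-\mathbf{t}_\lambda a\to0$ and $\pi(\mathbf{t}_\lambda)a\to a$ for all $a\in\mathfrak{A}$; $\mathfrak{A}$ is symmetrically pseudo-amenable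 if it has one. *)

theory Defs
  imports "HOL-Analysis.Analysis"
begin

class complex_vector = real_vector +
  fixes scaleC :: "complex \<Rightarrow> 'a \<Rightarrow> 'a"
  assumes scaleC_add_right: "scaleC c (x + y) = scaleC c x + scaleC c y"
    and scaleC_add_left: "scaleC (c + d) x = scaleC c x + scaleC d x"
    and scaleC_scaleC: "scaleC c (scaleC d x) = scaleC (c * d) x"
    and scaleC_one: "scaleC 1 x = x"
    and scaleR_scaleC: "scaleR r x = scaleC (of_real r) x"

class complex_normed_vector = complex_vector + real_normed_vector +
  assumes norm_scaleC: "norm (scaleC c x) = cmod c * norm x"

class complex_normed_algebra = complex_normed_vector + real_normed_algebra +
  assumes scaleC_left_mult: "scaleC c x * y = scaleC c (x * y)"
    and scaleC_right_mult: "x * scaleC c y = scaleC c (x * y)"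

text \<open>A (complex) Banach algebra is a type of class
  complex_normed_algebra and banach (not necessarily unital or commutative).\<close>

definition clinear :: "('a::complex_vector \<Rightarrow> 'b::complex_vector) \<Rightarrow> bool" where
  "clinear f \<longleftrightarrow> (\<forall>x y. f (x + y) = f x + f y) \<and> (\<forall>c x. f (scaleC c x) = scaleC c (f x))"

definition cbounded :: "('a::real_normed_vector \<Rightarrow> 'b::real_normed_vector) \<Rightarrow> bool" where
  "cbounded f \<longleftrightarrow> (\<exists>K. \<forall>x. norm (f x) \<le> K * norm x)"

definition banach_bimodule ::
  "('a::complex_normed_algebra \<Rightarrow> 'x::{complex_normed_vector,banach} \<Rightarrow> 'x)
   \<Rightarrow> ('x \<Rightarrow> 'a \<Rightarrow> 'x) \<Rightarrow> bool" where
  "banach_bimodule lact ract \<longleftrightarrow>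
     (\<forall>a b x. lact (a + b) x = lact a x + lact b x) \<and>
     (\<forall>a x y. lact a (x + y) = lact a x + lact a y) \<and>
     (\<forall>c a x. lact (scaleC c a) x = scaleC c (lact a x)) \<and>
     (\<forall>c a x. lact a (scaleC c x) = scaleC c (lact a x)) \<and>
     (\<forall>a b x. ract x (a + b) = ract x a + ract x b) \<and>
     (\<forall>a x y. ract (x + y) a = ract x a + ract y a) \<and>
     (\<forall>c a x. ract x (scaleC c a) = scaleC c (ract x a)) \<and>
     (\<forall>c a x. ract (scaleC c x) a = scaleC c (ract x a)) \<and>
     (\<forall>a b x. lact a (lact b x) = lact (a * b) x) \<and>
     (\<forall>a b x. ract (ract x a) b = ract x (a * b)) \<and>
     (\<forall>a b x. ract (lact a x) b = lact a (ract x b)) \<and>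
     (\<exists>K. \<forall>a x. norm (lact a x) \<le> K * norm a * norm x \<and> norm (ract x a) \<le> K * norm x * norm a)"

definition centre :: "('a \<Rightarrow> 'x \<Rightarrow> 'x) \<Rightarrow> ('x \<Rightarrow> 'a \<Rightarrow> 'x) \<Rightarrow> 'x set" where
  "centre lact ract = {x. \<forall>a. lact a x = ract x a}"

definition derivation ::
  "('a::complex_normed_algebra \<Rightarrow> 'x \<Rightarrow> 'x) \<Rightarrow> ('x \<Rightarrow> 'a \<Rightarrow> 'x) \<Rightarrow> ('a \<Rightarrow> 'x::complex_vector) \<Rightarrow> bool" where
  "derivation lact ract D \<longleftrightarrow> clinear D \<and>
     (\<forall>a b. D (a * b) = ract (D a) b + lact a (D b))"

definition jordan_derivation ::
  "('a::complex_normed_algebra \<Rightarrow> 'x \<Rightarrow> 'x) \<Rightarrow> ('x \<Rightarrow> 'a \<Rightarrow> 'x) \<Rightarrow> ('a \<Rightarrow> 'x::complex_vector) \<Rightarrow> bool" where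
  "jordan_derivation lact ract D \<longleftrightarrow> clinear D \<and>
     (\<forall>a b. D (a * b + b * a) = ract (D a) b + lact a (D b) + ract (D b) a + lact b (D a))"

section \<open>Unitization U# = U \<oplus> C1 with the l1-norm, modelled on 'a \<times> complex\<close>

definition uadd :: "'a::complex_normed_algebra \<times> complex \<Rightarrow> 'a \<times> complex \<Rightarrow> 'a \<times> complex" where
  "uadd u v = (fst u + fst v, snd u + snd v)"

definition uneg :: "'a::complex_normed_algebra \<times> complex \<Rightarrow> 'a \<times> complex" where
  "uneg u = (- fst u, - snd u)"

definition uscale :: "complex \<Rightarrow> 'a::complex_normed_algebra \<times> complex \<Rightarrow> 'a \<times> complex" where
  "uscale c u = (scaleC c (fst u), c * snd u)"

definition umult :: "'a::complex_normed_algebra \<times> complex \<Rightarrow> 'a \<times> complex \<Rightarrow> 'a \<times> complex" where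
  "umult u v = (fst u * fst v + scaleC (snd u) (fst v) + scaleC (snd v) (fst u), snd u * snd v)"

definition unorm :: "'a::complex_normed_algebra \<times> complex \<Rightarrow> real" where
  "unorm u = norm (fst u) + cmod (snd u)"

text \<open>A list of pairs [(u1,v1),...,(un,vn)] represents the tensor u1\<otimes>v1 + ... + un\<otimes>vn.
  Its image in the free complex vector space on U# \<times> U# is fv; two lists represent the
  same tensor iff the difference of their images lies in the complex span of the
  bilinearity relations (the standard construction of the algebraic tensor product).\<close>

definition fv :: "('u \<times> 'u) list \<Rightarrow> ('u \<times> 'u \<Rightarrow> complex)" where
  "fv L = (\<lambda>p. of_nat (count_list L p))"

definition delta :: "'u \<times> 'u \<Rightarrow> ('u \<times> 'u \<Rightarrow> complex)" where
  "delta p = (\<lambda>q. if q = p then 1 else 0)"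

definition tensor_relations ::
  "(('a::complex_normed_algebra \<times> complex) \<times> ('a \<times> complex) \<Rightarrow> complex) set" where
  "tensor_relations =
     {(\<lambda>q. delta (uadd u u', v) q - delta (u, v) q - delta (u', v) q) | u u' v. True} \<union>
     {(\<lambda>q. delta (u, uadd v v') q - delta (u, v) q - delta (u, v') q) | u v v'. True} \<union>
     {(\<lambda>q. delta (uscale c u, v) q - c * delta (u, v) q) | c u v. True} \<union>
     {(\<lambda>q. delta (u, uscale c v) q - c * delta (u, v) q) | c u v. True}"

definition tensor_eq ::
  "(('a::complex_normed_algebra \<times> complex) \<times> ('a \<times> complex)) list \<Rightarrow> (('a \<times> complex) \<times> ('a \<times> complex)) list \<Rightarrow> bool" where
  "tensor_eq L M \<longleftrightarrow>
     (\<exists>S coef. finite S \<and> S \<subseteq> tensor_relations \<and>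
        (\<forall>q. fv L q - fv M q = (\<Sum>g\<in>S. coef g * g q)))"

definition tcost :: "(('a::complex_normed_algebra \<times> complex) \<times> ('a \<times> complex)) list \<Rightarrow> real" where
  "tcost L = sum_list (map (\<lambda>p. unorm (fst p) * unorm (snd p)) L)"

definition pnorm :: "(('a::complex_normed_algebra \<times> complex) \<times> ('a \<times> complex)) list \<Rightarrow> real" where
  "pnorm L = Inf {tcost M | M. tensor_eq M L}"

text \<open>Every element of the completion is an absolutely convergent series
  \<Sum>n. u_n \<otimes> v_n with \<Sum>n \<parallel>u_n\<parallel>\<parallel>v_n\<parallel> < \<infinity>; we represent it by the sequence
  of pairs.\<close>

type_synonym 'a ctensor = "nat \<Rightarrow> ('a \<times> complex) \<times> ('a \<times> complex)"

definition ctensor_ok :: "'a::complex_normed_algebra ctensor \<Rightarrow> bool" where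
  "ctensor_ok s \<longleftrightarrow> summable (\<lambda>n. unorm (fst (s n)) * unorm (snd (s n)))"

definition cnorm :: "'a::complex_normed_algebra ctensor \<Rightarrow> real" where
  "cnorm s = lim (\<lambda>n. pnorm (map s [0..<n]))"

text \<open>Difference s - s' (as the interleaved series).\<close>
definition cdiff :: "'a::complex_normed_algebra ctensor \<Rightarrow> 'a ctensor \<Rightarrow> 'a ctensor" where
  "cdiff s s' = (\<lambda>n. if even n then s (n div 2)
                     else (uneg (fst (s' (n div 2))), snd (s' (n div 2))))"

definition lmod :: "'a::complex_normed_algebra \<times> complex \<Rightarrow> 'a ctensor \<Rightarrow> 'a ctensor" where
  "lmod a s = (\<lambda>n. (umult a (fst (s n)), snd (s n)))"

definition rmod :: "'a::complex_normed_algebra ctensor \<Rightarrow> 'a \<times> complex \<Rightarrow> 'a ctensor" where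
  "rmod s a = (\<lambda>n. (fst (s n), umult (snd (s n)) a))"

definition cflip :: "'a::complex_normed_algebra ctensor \<Rightarrow> 'a ctensor" where
  "cflip s = (\<lambda>n. (snd (s n), fst (s n)))"

definition csymmetric :: "'a::complex_normed_algebra ctensor \<Rightarrow> bool" where
  "csymmetric s \<longleftrightarrow> cnorm (cdiff (cflip s) s) = 0"

definition cpi :: "'a::complex_normed_algebra ctensor \<Rightarrow> 'a \<times> complex" where
  "cpi s = (\<Sum>n. umult (fst (s n)) (snd (s n)))"

definition directed_set :: "('i \<Rightarrow> 'i \<Rightarrow> bool) \<Rightarrow> bool" where
  "directed_set le \<longleftrightarrow> (\<forall>i. le i i) \<and> (\<forall>i j k. le i j \<longrightarrow> le j k \<longrightarrow> le i k) \<and>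
     (\<forall>i j. \<exists>k. le i k \<and> le j k)"

definition net_to_zero :: "('i \<Rightarrow> 'i \<Rightarrow> bool) \<Rightarrow> ('i \<Rightarrow> real) \<Rightarrow> bool" where
  "net_to_zero le f \<longleftrightarrow> (\<forall>e>0. \<exists>i0. \<forall>i. le i0 i \<longrightarrow> \<bar>f i\<bar> < e)"

definition sym_approx_diag_unitization ::
  "('i \<Rightarrow> 'i \<Rightarrow> bool) \<Rightarrow> ('i \<Rightarrow> 'a::complex_normed_algebra ctensor) \<Rightarrow> bool" where
  "sym_approx_diag_unitization le t \<longleftrightarrow>
     directed_set le \<and>
     (\<forall>i. ctensor_ok (t i) \<and> csymmetric (t i)) \<and>
     (\<forall>a. net_to_zero le (\<lambda>i. cnorm (cdiff (lmod a (t i)) (rmod (t i) a)))) \<and>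
     (\<forall>a. net_to_zero le (\<lambda>i. unorm (uadd (umult (cpi (t i)) a) (uneg a))))"

end

theory Submission
  imports Defs
begin

(* Let D be a Jordan derivation with central values. Its defect E(a,b) = D(ab) - b D(a) - a D(b)
   is antisymmetric and equal to (D(ab) - D(ba))/2, hence central, and for fixed b the map
   a \<mapsto> E(a,b) is again a bounded central derivation. So it suffices that every bounded central
   derivation d vanishes. For such d the bilinear form B(u,v) = u d(v) - d(u) v on the unitization
   is antisymmetric, so it kills every symmetric tensor m, and applied to a m - m a it yields
   -2 \<pi>(m) d(a). Along a symmetric approximate diagonal, a m - m a tends to 0 in projective norm
   while \<pi>(m) tends to 1, which forces d(a) = 0. *)

global_interpretation complex_vector: module "scaleC :: complex \<Rightarrow> 'a \<Rightarrow> 'a::complex_vector"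
  by unfold_locales (simp_all add: scaleC_add_right scaleC_add_left scaleC_scaleC scaleC_one)

lemma add_self_eq_iff: "(x::'a::real_vector) + x = y \<longleftrightarrow> x = scaleR (1/2) y"
  by (auto simp flip: scaleR_2)

lemma cboundedE:
  assumes "cbounded f"
  obtains K where "0 \<le> K" "\<And>x. norm (f x) \<le> K * norm x"
proof -
  obtain K where K: "\<And>x. norm (f x) \<le> K * norm x"
    using assms unfolding cbounded_def by blast
  have "norm (f x) \<le> \<bar>K\<bar> * norm x" for x
    using K[of x] mult_right_mono[OF abs_ge_self[of K] norm_ge_zero[of x]] by linarith
  then show thesis
    by (rule that[rotated]) simp
qed

lemma summable_interleave_nonneg:
  fixes f :: "nat \<Rightarrow> real"
  assumes f: "\<And>i. 0 \<le> f i" "summable (\<lambda>k. f (2*k))" "summable (\<lambda>k. f (2*k+1))"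
  shows "summable f"
proof (rule summableI_nonneg_bounded[OF f(1)])
  fix n
  have "(\<Sum>i<n. f i) \<le> (\<Sum>i<2*n. f i)"
    using f(1) by (intro sum_mono2) auto
  also have "\<dots> = (\<Sum>k<n. f (2*k) + f (2*k+1))"
    by (induction n) simp_all
  also have "\<dots> \<le> (\<Sum>k. f (2*k) + f (2*k+1))"
    using f by (intro sum_le_suminf summable_add) auto
  finally show "(\<Sum>i<n. f i) \<le> (\<Sum>k. f (2*k) + f (2*k+1))" .
qed

lemma suminf_interleave:
  fixes f :: "nat \<Rightarrow> 'v::real_normed_vector"
  assumes "summable f"
  shows "suminf f = (\<Sum>k. f (2*k) + f (2*k+1))"
proof -
  have "(\<lambda>n. sum f {n*2..<n*2+2}) sums suminf f"
    using assms by (intro sums_group) auto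
  moreover have "sum f {n*2..<n*2+2} = f (2*n) + f (2*n+1)" for n
    by (simp add: numeral_2_eq_2 mult.commute)
  ultimately show ?thesis
    by (simp add: sums_unique)
qed

lemma norm_le_norm_add_self:
  fixes x y :: "'a::real_normed_vector"
  assumes "norm (y - x) \<le> norm x / 2"
  shows "norm x \<le> norm (y + y)"
proof -
  have "norm x \<le> norm y + norm (y - x)"
    using norm_triangle_sub[of x y] norm_minus_commute[of x y] by simp
  then show ?thesis
    using assms by (simp flip: scaleR_2)
qed

lemma unorm_nonneg: "0 \<le> unorm u"
  by (simp add: unorm_def)

lemma norm_le_unorm: "norm u \<le> unorm u"
  using norm_Pair_le[of "fst u" "snd u"] by (simp add: unorm_def)

lemma unorm_le_norm: "unorm u \<le> 2 * norm u"
  using norm_fst_le[of "fst u" "snd u"] norm_snd_le[of "snd u" "fst u"] by (simp add: unorm_def)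

lemma unorm_umult: "unorm (umult u v) \<le> unorm u * unorm v"
proof -
  have "norm (fst u * fst v + scaleC (snd u) (fst v) + scaleC (snd v) (fst u))
      \<le> norm (fst u) * norm (fst v) + cmod (snd u) * norm (fst v) + cmod (snd v) * norm (fst u)"
  proof -
    have "norm (fst u * fst v + scaleC (snd u) (fst v) + scaleC (snd v) (fst u))
        \<le> norm (fst u * fst v) + norm (scaleC (snd u) (fst v)) + norm (scaleC (snd v) (fst u))"
      by (meson add_right_mono norm_triangle_ineq order_trans)
    then show ?thesis
      using norm_mult_ineq[of "fst u" "fst v"] by (simp add: norm_scaleC)
  qed
  then have "unorm (umult u v) \<le> norm (fst u) * norm (fst v) + cmod (snd u) * norm (fst v)
      + cmod (snd v) * norm (fst u) + cmod (snd u) * cmod (snd v)"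
    by (simp add: unorm_def umult_def norm_mult)
  also have "\<dots> = unorm u * unorm v"
    by (simp add: unorm_def distrib_left distrib_right mult.commute)
  finally show ?thesis .
qed

lemma unorm_uneg [simp]: "unorm (uneg u) = unorm u"
  by (simp add: unorm_def uneg_def)

lemma uneg_eq_uscale: "uneg u = uscale (-1) u"
  by (simp add: uneg_def uscale_def)

lemma uadd_eq_plus: "uadd u v = u + v"
  by (simp add: uadd_def prod_eq_iff)

lemma uscale_of_real: "uscale (of_real r) u = scaleR r u"
  by (simp add: uscale_def scaleR_scaleC scaleR_conv_of_real prod_eq_iff)

lemma fst_uadd [simp]: "fst (uadd u v) = fst u + fst v"
  and fst_uscale [simp]: "fst (uscale c u) = scaleC c (fst u)"
  by (simp_all add: uadd_def uscale_def)

section \<open>Bounded bilinear maps on the projective tensor product\<close>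

definition ubilinear :: "('a::complex_normed_algebra \<times> complex \<Rightarrow> 'a \<times> complex \<Rightarrow> 'x::complex_vector) \<Rightarrow> bool"
  where "ubilinear B \<longleftrightarrow>
    (\<forall>u u' v. B (uadd u u') v = B u v + B u' v) \<and> (\<forall>u v v'. B u (uadd v v') = B u v + B u v') \<and>
    (\<forall>c u v. B (uscale c u) v = scaleC c (B u v)) \<and> (\<forall>c u v. B u (uscale c v) = scaleC c (B u v))"

definition bounded_ubilinear ::
    "('a::complex_normed_algebra \<times> complex \<Rightarrow> 'a \<times> complex \<Rightarrow> 'x::complex_normed_vector) \<Rightarrow> real \<Rightarrow> bool"
  where "bounded_ubilinear B K \<longleftrightarrow> ubilinear B \<and> 0 < K \<and> (\<forall>u v. norm (B u v) \<le> K * unorm u * unorm v)"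

definition tensor_eval ::
    "('a::complex_normed_algebra \<times> complex \<Rightarrow> 'a \<times> complex \<Rightarrow> 'x::complex_vector)
     \<Rightarrow> (('a \<times> complex) \<times> ('a \<times> complex)) list \<Rightarrow> 'x"
  where "tensor_eval B L = (\<Sum>p\<leftarrow>L. B (fst p) (snd p))"

definition ctensor_eval ::
    "('a::complex_normed_algebra \<times> complex \<Rightarrow> 'a \<times> complex \<Rightarrow> 'x::complex_normed_vector) \<Rightarrow> 'a ctensor \<Rightarrow> 'x"
  where "ctensor_eval B s = (\<Sum>n. B (fst (s n)) (snd (s n)))"

lemma ubilinearD:
  assumes "ubilinear B"
  shows "B (uadd u u') v = B u v + B u' v" "B u (uadd v v') = B u v + B u v'"
    "B (uscale c u) v = scaleC c (B u v)" "B u (uscale c v) = scaleC c (B u v)"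
  using assms unfolding ubilinear_def by blast+

lemma bounded_ubilinearD:
  assumes "bounded_ubilinear B K"
  shows "ubilinear B" "0 < K" "norm (B u v) \<le> K * unorm u * unorm v"
  using assms unfolding bounded_ubilinear_def by blast+

lemma ubilinear_uneg_left: "ubilinear B \<Longrightarrow> B (uneg u) v = - B u v"
  by (simp add: ubilinearD uneg_eq_uscale scaleC_one)

lemma fv_Cons: "fv (p # L) q = fv L q + delta p q"
  by (simp add: fv_def delta_def)

lemma fv_append: "fv (L @ M) q = fv L q + fv M q"
  by (simp add: fv_def)

lemma sum_scaleC_delta:
  assumes "finite F" "p \<in> F"
  shows "(\<Sum>q\<in>F. scaleC (delta p q) (h q)) = (h p :: 'x::complex_vector)"
proof -
  have "(\<Sum>q\<in>F. scaleC (delta p q) (h q)) = (\<Sum>q\<in>F. if q = p then h q else 0)"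
    by (intro sum.cong) (auto simp: delta_def scaleC_one)
  also have "\<dots> = h p"
    using assms by (simp add: sum.delta')
  finally show ?thesis .
qed

lemma tensor_eval_fv:
  assumes "finite F" "set L \<subseteq> F"
  shows "tensor_eval B L = (\<Sum>q\<in>F. scaleC (fv L q) (B (fst q) (snd q)))"
  using assms(2)
proof (induction L)
  case Nil
  then show ?case by (simp add: tensor_eval_def fv_def)
next
  case (Cons p L)
  then show ?case
    using assms(1)
    by (simp add: tensor_eval_def fv_Cons complex_vector.scale_left_distrib sum.distrib sum_scaleC_delta)
qed

lemma ubilinear_kills_tensor_relation:
  assumes B: "ubilinear B" and g: "g \<in> tensor_relations"
  shows "\<exists>P. finite P \<and>
    (\<forall>F. finite F \<longrightarrow> P \<subseteq> F \<longrightarrow> (\<Sum>q\<in>F. scaleC (g q) (B (fst q) (snd q))) = 0)"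
proof -
  let ?h = "\<lambda>q. B (fst q) (snd q)"
  have three: "(\<Sum>q\<in>F. scaleC (delta p1 q - delta p2 q - delta p3 q) (?h q)) = ?h p1 - ?h p2 - ?h p3"
    if "finite F" "{p1, p2, p3} \<subseteq> F" for F p1 p2 p3
    using that by (simp add: complex_vector.scale_left_diff_distrib sum_subtractf sum_scaleC_delta)
  have two: "(\<Sum>q\<in>F. scaleC (delta p1 q - c * delta p2 q) (?h q)) = ?h p1 - scaleC c (?h p2)"
    if "finite F" "{p1, p2} \<subseteq> F" for F p1 p2 c
  proof -
    have "scaleC c (?h p2) = scaleC c (\<Sum>q\<in>F. scaleC (delta p2 q) (?h q))"
      using that by (simp add: sum_scaleC_delta)
    also have "\<dots> = (\<Sum>q\<in>F. scaleC (c * delta p2 q) (?h q))"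
      by (simp add: complex_vector.scale_sum_right)
    finally show ?thesis
      using that by (simp add: complex_vector.scale_left_diff_distrib sum_subtractf sum_scaleC_delta)
  qed
  from g show ?thesis
    unfolding tensor_relations_def
  proof (elim UnE CollectE exE conjE)
    fix u u' v assume "g = (\<lambda>q. delta (uadd u u', v) q - delta (u, v) q - delta (u', v) q)"
    then show ?thesis
      by (intro exI[of _ "{(uadd u u', v), (u, v), (u', v)}"]) (simp_all add: three ubilinearD[OF B])
  next
    fix u v v' assume "g = (\<lambda>q. delta (u, uadd v v') q - delta (u, v) q - delta (u, v') q)"
    then show ?thesis
      by (intro exI[of _ "{(u, uadd v v'), (u, v), (u, v')}"]) (simp_all add: three ubilinearD[OF B])
  next
    fix c u v assume "g = (\<lambda>q. delta (uscale c u, v) q - c * delta (u, v) q)"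
    then show ?thesis
      by (intro exI[of _ "{(uscale c u, v), (u, v)}"]) (simp_all add: two ubilinearD[OF B])
  next
    fix c u v assume "g = (\<lambda>q. delta (u, uscale c v) q - c * delta (u, v) q)"
    then show ?thesis
      by (intro exI[of _ "{(u, uscale c v), (u, v)}"]) (simp_all add: two ubilinearD[OF B])
  qed
qed

lemma tensor_eval_cong:
  assumes B: "ubilinear B" and "tensor_eq M L"
  shows "tensor_eval B M = tensor_eval B L"
proof -
  let ?h = "\<lambda>q. B (fst q) (snd q)"
  obtain S coef where S: "finite S" "S \<subseteq> tensor_relations"
    and diff: "\<And>q. fv M q - fv L q = (\<Sum>g\<in>S. coef g * g q)"
    using \<open>tensor_eq M L\<close> unfolding tensor_eq_def by blast
  have "\<forall>g\<in>S. \<exists>P. finite P \<and> (\<forall>F. finite F \<longrightarrow> P \<subseteq> F \<longrightarrow> (\<Sum>q\<in>F. scaleC (g q) (?h q)) = 0)"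
  proof
    fix g assume "g \<in> S"
    with S(2) show "\<exists>P. finite P \<and> (\<forall>F. finite F \<longrightarrow> P \<subseteq> F \<longrightarrow> (\<Sum>q\<in>F. scaleC (g q) (?h q)) = 0)"
      by (intro ubilinear_kills_tensor_relation[OF B]) blast
  qed
  then obtain P where P: "\<forall>g\<in>S. finite (P g) \<and>
      (\<forall>F. finite F \<longrightarrow> P g \<subseteq> F \<longrightarrow> (\<Sum>q\<in>F. scaleC (g q) (?h q)) = 0)"
    by (rule bchoice[THEN exE])
  define F where "F = set M \<union> set L \<union> \<Union>(P ` S)"
  have F: "finite F" "set M \<subseteq> F" "set L \<subseteq> F"
    using S(1) P by (auto simp: F_def)
  have "tensor_eval B M - tensor_eval B L = (\<Sum>q\<in>F. scaleC (fv M q - fv L q) (?h q))"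
    by (simp add: tensor_eval_fv[OF F(1,2)] tensor_eval_fv[OF F(1,3)]
        complex_vector.scale_left_diff_distrib sum_subtractf)
  also have "\<dots> = (\<Sum>q\<in>F. \<Sum>g\<in>S. scaleC (coef g) (scaleC (g q) (?h q)))"
    by (simp add: diff complex_vector.scale_sum_left)
  also have "\<dots> = (\<Sum>g\<in>S. scaleC (coef g) (\<Sum>q\<in>F. scaleC (g q) (?h q)))"
    by (subst sum.swap) (simp add: complex_vector.scale_sum_right)
  also have "\<dots> = 0"
  proof (intro sum.neutral ballI)
    fix g assume "g \<in> S"
    moreover have "P g \<subseteq> F"
      using \<open>g \<in> S\<close> by (auto simp: F_def)
    ultimately show "scaleC (coef g) (\<Sum>q\<in>F. scaleC (g q) (?h q)) = 0"
      using P F(1) by simp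
  qed
  finally show ?thesis by simp
qed

lemma tcost_append: "tcost (L @ M) = tcost L + tcost M"
  by (simp add: tcost_def)

lemma tcost_nonneg: "0 \<le> tcost L"
  by (induction L) (simp_all add: tcost_def unorm_nonneg)

lemma norm_tensor_eval_le_tcost:
  assumes "bounded_ubilinear B K"
  shows "norm (tensor_eval B L) \<le> K * tcost L"
proof (induction L)
  case (Cons p L)
  have "norm (B (fst p) (snd p)) \<le> K * (unorm (fst p) * unorm (snd p))"
    using bounded_ubilinearD(3)[OF assms] by (simp add: mult.assoc)
  moreover have "tensor_eval B (p # L) = B (fst p) (snd p) + tensor_eval B L"
    and "tcost (p # L) = unorm (fst p) * unorm (snd p) + tcost L"
    by (simp_all add: tensor_eval_def tcost_def)
  ultimately show ?case
    using Cons.IH norm_triangle_ineq[of "B (fst p) (snd p)" "tensor_eval B L"]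
    by (simp add: distrib_left)
qed (simp add: tensor_eval_def tcost_def)

lemma pnorm_set_nonempty: "{tcost M |M. tensor_eq M L} \<noteq> {}"
proof -
  have "tensor_eq L L"
    unfolding tensor_eq_def by (intro exI[of _ "{}"]) auto
  then show ?thesis by blast
qed

lemma pnorm_le_tcost: "tensor_eq M L \<Longrightarrow> pnorm L \<le> tcost M"
  unfolding pnorm_def by (rule cInf_lower) (auto intro: bdd_belowI[of _ 0] simp: tcost_nonneg)

lemma pnorm_nonneg: "0 \<le> pnorm L"
  unfolding pnorm_def using pnorm_set_nonempty by (intro cInf_greatest) (auto simp: tcost_nonneg)

lemma pnorm_append_le: "pnorm (L @ N) \<le> pnorm L + tcost N"
proof -
  have "pnorm (L @ N) - tcost N \<le> pnorm L"
    unfolding pnorm_def[of L]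
  proof (rule cInf_greatest[OF pnorm_set_nonempty], clarify)
    fix M assume "tensor_eq M L"
    then have "tensor_eq (M @ N) (L @ N)"
      by (simp add: tensor_eq_def fv_append)
    then show "pnorm (L @ N) - tcost N \<le> tcost M"
      using pnorm_le_tcost by (fastforce simp: tcost_append)
  qed
  then show ?thesis by simp
qed

lemma norm_tensor_eval_le_pnorm:
  assumes B: "bounded_ubilinear B K"
  shows "norm (tensor_eval B L) \<le> K * pnorm L"
proof -
  have K: "0 < K" "ubilinear B"
    using bounded_ubilinearD[OF B] by auto
  have "norm (tensor_eval B L) / K \<le> pnorm L"
    unfolding pnorm_def
  proof (rule cInf_greatest[OF pnorm_set_nonempty], clarify)
    fix M assume "tensor_eq M L"
    then have "norm (tensor_eval B L) \<le> K * tcost M"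
      using norm_tensor_eval_le_tcost[OF B, of M] tensor_eval_cong[OF K(2)] by simp
    then show "norm (tensor_eval B L) / K \<le> tcost M"
      using K by (simp add: divide_le_eq mult.commute)
  qed
  then show ?thesis
    using K by (simp add: divide_le_eq mult.commute)
qed

lemma cnorm_LIMSEQ:
  assumes "ctensor_ok s"
  shows "(\<lambda>N. pnorm (map s [0..<N])) \<longlonglongrightarrow> cnorm s"
proof -
  define c where "c = (\<lambda>n. unorm (fst (s n)) * unorm (snd (s n)))"
  define x where "x = (\<lambda>N. pnorm (map s [0..<N]))"
  have c: "summable c" "\<And>n. 0 \<le> c n"
    using assms by (simp_all add: ctensor_ok_def c_def unorm_nonneg)
  have x_Suc: "x (Suc N) \<le> x N + c N" for N
    using pnorm_append_le[of "map s [0..<N]" "[s N]"] by (simp add: x_def c_def tcost_def)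
  \<comment> \<open>x plus the tail of the majorant series is decreasing and nonnegative\<close>
  define y where "y N = x N + (suminf c - (\<Sum>n<N. c n))" for N
  have "decseq y"
    using x_Suc by (simp add: decseq_Suc_iff y_def diff_le_eq add.commute)
  moreover have "0 \<le> y N" for N
  proof -
    have "(\<Sum>n<N. c n) \<le> suminf c"
      using c by (intro sum_le_suminf) auto
    then show ?thesis
      using pnorm_nonneg[of "map s [0..<N]"] by (simp add: y_def x_def)
  qed
  ultimately obtain l where "y \<longlonglongrightarrow> l"
    using decseq_convergent by blast
  moreover have "(\<lambda>N. suminf c - (\<Sum>n<N. c n)) \<longlonglongrightarrow> 0"
    using tendsto_diff[OF tendsto_const summable_LIMSEQ[OF c(1)], of "suminf c"] by simp
  ultimately have "(\<lambda>N. y N - (suminf c - (\<Sum>n<N. c n))) \<longlonglongrightarrow> l - 0"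
    by (rule tendsto_diff)
  then have "x \<longlonglongrightarrow> l"
    by (simp add: y_def)
  then show ?thesis
    using limI[of x l] by (simp add: cnorm_def x_def)
qed

lemma summable_ctensor_eval:
  fixes B :: "'a::complex_normed_algebra \<times> complex \<Rightarrow> 'a \<times> complex \<Rightarrow> 'x::{complex_normed_vector,banach}"
  assumes "bounded_ubilinear B K" "ctensor_ok s"
  shows "summable (\<lambda>n. B (fst (s n)) (snd (s n)))"
proof (rule summable_comparison_test)
  show "summable (\<lambda>n. K * (unorm (fst (s n)) * unorm (snd (s n))))"
    using assms(2) unfolding ctensor_ok_def by (rule summable_mult)
  show "\<exists>N. \<forall>n\<ge>N. norm (B (fst (s n)) (snd (s n))) \<le> K * (unorm (fst (s n)) * unorm (snd (s n)))"
    using bounded_ubilinearD(3)[OF assms(1)] by (auto simp: mult.assoc)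
qed

lemma norm_ctensor_eval_le:
  fixes B :: "'a::complex_normed_algebra \<times> complex \<Rightarrow> 'a \<times> complex \<Rightarrow> 'x::{complex_normed_vector,banach}"
  assumes B: "bounded_ubilinear B K" and s: "ctensor_ok s"
  shows "norm (ctensor_eval B s) \<le> K * cnorm s"
proof (rule LIMSEQ_le)
  have "tensor_eval B (map s [0..<N]) = (\<Sum>n<N. B (fst (s n)) (snd (s n)))" for N
    by (induction N) (simp_all add: tensor_eval_def)
  then have "(\<lambda>N. tensor_eval B (map s [0..<N])) \<longlonglongrightarrow> ctensor_eval B s"
    using summable_LIMSEQ[OF summable_ctensor_eval[OF B s]] by (simp add: ctensor_eval_def)
  then show "(\<lambda>N. norm (tensor_eval B (map s [0..<N]))) \<longlonglongrightarrow> norm (ctensor_eval B s)"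
    by (rule tendsto_norm)
  show "(\<lambda>N. K * pnorm (map s [0..<N])) \<longlonglongrightarrow> K * cnorm s"
    by (intro tendsto_mult_left cnorm_LIMSEQ s)
  show "\<exists>N. \<forall>n\<ge>N. norm (tensor_eval B (map s [0..<n])) \<le> K * pnorm (map s [0..<n])"
    using norm_tensor_eval_le_pnorm[OF B] by blast
qed

lemma cdiff_even [simp]: "cdiff s s' (2*k) = s k"
  and cdiff_odd [simp]: "cdiff s s' (Suc (2*k)) = (uneg (fst (s' k)), snd (s' k))"
  by (simp_all add: cdiff_def)

lemma ctensor_ok_cdiff: "ctensor_ok s \<Longrightarrow> ctensor_ok s' \<Longrightarrow> ctensor_ok (cdiff s s')"
  unfolding ctensor_ok_def by (rule summable_interleave_nonneg) (simp_all add: unorm_nonneg)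

lemma ctensor_ok_cflip: "ctensor_ok s \<Longrightarrow> ctensor_ok (cflip s)"
  by (simp add: ctensor_ok_def cflip_def mult.commute)

lemma ctensor_ok_lmod:
  assumes "ctensor_ok s"
  shows "ctensor_ok (lmod a s)"
  unfolding ctensor_ok_def
proof (rule summable_comparison_test'[where N = 0])
  show "summable (\<lambda>n. unorm a * (unorm (fst (s n)) * unorm (snd (s n))))"
    using assms unfolding ctensor_ok_def by (rule summable_mult)
  show "norm (unorm (fst (lmod a s n)) * unorm (snd (lmod a s n)))
      \<le> unorm a * (unorm (fst (s n)) * unorm (snd (s n)))" for n
    using unorm_umult[of a "fst (s n)"]
    by (simp add: lmod_def unorm_nonneg abs_mult mult.assoc[symmetric] mult_right_mono)
qed

lemma ctensor_ok_rmod: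
  assumes "ctensor_ok s"
  shows "ctensor_ok (rmod s a)"
  unfolding ctensor_ok_def
proof (rule summable_comparison_test'[where N = 0])
  show "summable (\<lambda>n. unorm (fst (s n)) * unorm (snd (s n)) * unorm a)"
    using assms unfolding ctensor_ok_def by (rule summable_mult2)
  show "norm (unorm (fst (rmod s a n)) * unorm (snd (rmod s a n)))
      \<le> unorm (fst (s n)) * unorm (snd (s n)) * unorm a" for n
    using unorm_umult[of "snd (s n)" a]
    by (simp add: rmod_def unorm_nonneg abs_mult mult.assoc mult_left_mono)
qed

lemma ctensor_eval_cdiff:
  fixes B :: "'a::complex_normed_algebra \<times> complex \<Rightarrow> 'a \<times> complex \<Rightarrow> 'x::{complex_normed_vector,banach}"
  assumes B: "bounded_ubilinear B K" and s: "ctensor_ok s" "ctensor_ok s'"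
  shows "ctensor_eval B (cdiff s s') = ctensor_eval B s - ctensor_eval B s'"
proof -
  have "ubilinear B"
    using B by (rule bounded_ubilinearD)
  then have "ctensor_eval B (cdiff s s') = (\<Sum>k. B (fst (s k)) (snd (s k)) - B (fst (s' k)) (snd (s' k)))"
    unfolding ctensor_eval_def
    by (subst suminf_interleave[OF summable_ctensor_eval[OF B ctensor_ok_cdiff[OF s]]])
      (simp add: ubilinear_uneg_left)
  also have "\<dots> = ctensor_eval B s - ctensor_eval B s'"
    unfolding ctensor_eval_def by (intro suminf_diff[symmetric] summable_ctensor_eval[OF B] s)
  finally show ?thesis .
qed

lemma ctensor_eval_symmetric_eq_0:
  fixes B :: "'a::complex_normed_algebra \<times> complex \<Rightarrow> 'a \<times> complex \<Rightarrow> 'x::{complex_normed_vector,banach}"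
  assumes B: "bounded_ubilinear B K" and m: "ctensor_ok m" "csymmetric m"
    and antisym: "\<And>u v. B v u = - B u v"
  shows "ctensor_eval B m = 0"
proof -
  have "(\<lambda>n. B (snd (m n)) (fst (m n))) = (\<lambda>n. - B (fst (m n)) (snd (m n)))"
    by (rule ext) (rule antisym)
  then have flip: "ctensor_eval B (cflip m) = - ctensor_eval B m"
    unfolding ctensor_eval_def cflip_def
    by (simp add: suminf_minus summable_ctensor_eval[OF B m(1)])
  have "norm (ctensor_eval B (cdiff (cflip m) m)) \<le> K * cnorm (cdiff (cflip m) m)"
    by (intro norm_ctensor_eval_le[OF B] ctensor_ok_cdiff ctensor_ok_cflip m)
  then have "ctensor_eval B (cdiff (cflip m) m) = 0"
    using m(2) by (simp add: csymmetric_def)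
  then have "- ctensor_eval B m = ctensor_eval B m"
    by (simp add: ctensor_eval_cdiff[OF B ctensor_ok_cflip[OF m(1)] m(1)] flip)
  then have "ctensor_eval B m + ctensor_eval B m = 0"
    by (simp add: neg_eq_iff_add_eq_0)
  then show ?thesis
    by (simp add: add_self_eq_iff)
qed

lemma summable_cpi_terms:
  fixes s :: "'a::{complex_normed_algebra,banach} ctensor"
  assumes "ctensor_ok s"
  shows "summable (\<lambda>n. umult (fst (s n)) (snd (s n)))"
proof (rule summable_comparison_test'[where N = 0])
  show "summable (\<lambda>n. unorm (fst (s n)) * unorm (snd (s n)))"
    using assms unfolding ctensor_ok_def .
  show "norm (umult (fst (s n)) (snd (s n))) \<le> unorm (fst (s n)) * unorm (snd (s n))" for n
    using norm_le_unorm[of "umult (fst (s n)) (snd (s n))"] unorm_umult[of "fst (s n)" "snd (s n)"]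
    by linarith
qed

locale bimodule =
  fixes lact :: "'a::complex_normed_algebra \<Rightarrow> 'x::{complex_normed_vector,banach} \<Rightarrow> 'x"
    and ract :: "'x \<Rightarrow> 'a \<Rightarrow> 'x"
  assumes banach_bimodule: "banach_bimodule lact ract"
begin

lemma lact_add_left: "lact (a + b) x = lact a x + lact b x"
  and lact_add_right: "lact a (x + y) = lact a x + lact a y"
  and lact_scaleC_left: "lact (scaleC c a) x = scaleC c (lact a x)"
  and lact_scaleC_right: "lact a (scaleC c x) = scaleC c (lact a x)"
  and ract_add_left: "ract (x + y) a = ract x a + ract y a"
  and ract_add_right: "ract x (a + b) = ract x a + ract x b"
  and ract_scaleC_left: "ract (scaleC c x) a = scaleC c (ract x a)"
  and ract_scaleC_right: "ract x (scaleC c a) = scaleC c (ract x a)"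
  and lact_lact: "lact a (lact b x) = lact (a * b) x"
  and ract_ract: "ract (ract x a) b = ract x (a * b)"
  and ract_lact: "ract (lact a x) b = lact a (ract x b)"
  using banach_bimodule unfolding banach_bimodule_def by auto

lemma additive_lact_left: "Modules.additive (\<lambda>a. lact a x)"
  and additive_lact_right: "Modules.additive (lact a)"
  and additive_ract_left: "Modules.additive (\<lambda>x. ract x a)"
  and additive_ract_right: "Modules.additive (ract x)"
  by unfold_locales (simp_all add: lact_add_left lact_add_right ract_add_left ract_add_right)

lemmas action_linear =
  Modules.additive.zero[OF additive_lact_left] Modules.additive.minus[OF additive_lact_left] Modules.additive.diff[OF additive_lact_left]
  Modules.additive.zero[OF additive_lact_right] Modules.additive.minus[OF additive_lact_right] Modules.additive.diff[OF additive_lact_right]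
  Modules.additive.zero[OF additive_ract_left] Modules.additive.minus[OF additive_ract_left] Modules.additive.diff[OF additive_ract_left]
  Modules.additive.zero[OF additive_ract_right] Modules.additive.minus[OF additive_ract_right] Modules.additive.diff[OF additive_ract_right]

lemmas action_simps = lact_add_left lact_add_right lact_scaleC_left lact_scaleC_right
  ract_add_left ract_add_right ract_scaleC_left ract_scaleC_right lact_lact ract_ract ract_lact
  action_linear

lemma action_bound:
  obtains K where "1 \<le> K"
    "\<And>a x. norm (lact a x) \<le> K * norm a * norm x" "\<And>a x. norm (ract x a) \<le> K * norm x * norm a"
proof -
  obtain K where "\<forall>a x. norm (lact a x) \<le> K * norm a * norm x \<and> norm (ract x a) \<le> K * norm x * norm a"
    using banach_bimodule unfolding banach_bimodule_def by auto
  then have K: "norm (lact a x) \<le> K * norm a * norm x" "norm (ract x a) \<le> K * norm x * norm a" for a x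
    by simp_all
  show thesis
  proof (rule that[of "\<bar>K\<bar> + 1"])
    show "norm (lact a x) \<le> (\<bar>K\<bar> + 1) * norm a * norm x" for a x
    proof -
      have "K * norm a * norm x \<le> (\<bar>K\<bar> + 1) * norm a * norm x"
        by (intro mult_right_mono) auto
      then show ?thesis
        using K(1)[of a x] by linarith
    qed
    show "norm (ract x a) \<le> (\<bar>K\<bar> + 1) * norm x * norm a" for a x
    proof -
      have "K * norm x * norm a \<le> (\<bar>K\<bar> + 1) * norm x * norm a"
        by (intro mult_right_mono) auto
      then show ?thesis
        using K(2)[of x a] by linarith
    qed
  qed simp
qed

lemma centre_subspace: "complex_vector.subspace (centre lact ract)"
  by (simp add: complex_vector.subspace_def centre_def action_simps)

definition ulact :: "'a \<times> complex \<Rightarrow> 'x \<Rightarrow> 'x"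
  where "ulact u x = lact (fst u) x + scaleC (snd u) x"

definition uract :: "'x \<Rightarrow> 'a \<times> complex \<Rightarrow> 'x"
  where "uract x u = ract x (fst u) + scaleC (snd u) x"

lemma ulact_umult: "ulact u (ulact v x) = ulact (umult u v) x"
  and uract_umult: "uract (uract x u) v = uract x (umult u v)"
  and uract_ulact: "uract (ulact u x) v = ulact u (uract x v)"
  by (simp_all add: ulact_def uract_def umult_def action_simps algebra_simps)

lemma ulact_add_right: "ulact u (x + y) = ulact u x + ulact u y"
  and uract_add_left: "uract (x + y) u = uract x u + uract y u"
  and ulact_uadd: "ulact (uadd u v) x = ulact u x + ulact v x"
  and uract_uadd: "uract x (uadd u v) = uract x u + uract x v"
  and ulact_uscale: "ulact (uscale c u) x = scaleC c (ulact u x)"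
  and uract_uscale: "uract x (uscale c u) = scaleC c (uract x u)"
  and ulact_scaleC_right: "ulact u (scaleC c x) = scaleC c (ulact u x)"
  and uract_scaleC_left: "uract (scaleC c x) u = scaleC c (uract x u)"
  by (simp_all add: ulact_def uract_def uadd_def uscale_def action_simps algebra_simps mult.commute)

lemma additive_ulact: "Modules.additive (ulact u)"
  and additive_uract: "Modules.additive (\<lambda>x. uract x u)"
  by unfold_locales (simp_all add: ulact_add_right uract_add_left)

lemmas uaction_simps = ulact_umult uract_umult uract_ulact ulact_add_right uract_add_left
  ulact_uadd uract_uadd ulact_uscale uract_uscale ulact_scaleC_right uract_scaleC_left
  Modules.additive.zero[OF additive_ulact] Modules.additive.minus[OF additive_ulact] Modules.additive.diff[OF additive_ulact]
  Modules.additive.zero[OF additive_uract] Modules.additive.minus[OF additive_uract] Modules.additive.diff[OF additive_uract]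

lemma uract_central: "x \<in> centre lact ract \<Longrightarrow> uract x u = ulact u x"
  by (simp add: uract_def ulact_def centre_def)

lemma uaction_bound:
  obtains K where "1 \<le> K"
    "\<And>u x. norm (ulact u x) \<le> K * unorm u * norm x" "\<And>u x. norm (uract x u) \<le> K * unorm u * norm x"
proof -
  obtain K where K: "1 \<le> K"
    "\<And>a x. norm (lact a x) \<le> K * norm a * norm x" "\<And>a x. norm (ract x a) \<le> K * norm x * norm a"
    using action_bound by blast
  have scalar: "cmod (snd u) * norm x \<le> K * cmod (snd u) * norm x" for u x
    using mult_right_mono[OF K(1), of "cmod (snd u) * norm x"] by (simp add: mult.assoc)
  have l: "norm (ulact u x) \<le> norm (lact (fst u) x) + cmod (snd u) * norm x" for u x
    unfolding ulact_def by (metis norm_scaleC norm_triangle_ineq)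
  have r: "norm (uract x u) \<le> norm (ract x (fst u)) + cmod (snd u) * norm x" for u x
    unfolding uract_def by (metis norm_scaleC norm_triangle_ineq)
  show thesis
  proof (rule that[OF K(1)])
    show "norm (ulact u x) \<le> K * unorm u * norm x" for u x
    proof -
      have "norm (ulact u x) \<le> K * norm (fst u) * norm x + K * cmod (snd u) * norm x"
        using l[of u x] K(2)[of "fst u" x] scalar[of u x] by linarith
      then show ?thesis
        by (simp add: unorm_def algebra_simps)
    qed
    show "norm (uract x u) \<le> K * unorm u * norm x" for u x
    proof -
      have "norm (uract x u) \<le> K * norm x * norm (fst u) + K * cmod (snd u) * norm x"
        using r[of x u] K(3)[of x "fst u"] scalar[of u x] by linarith
      then show ?thesis
        by (simp add: unorm_def algebra_simps)
    qed
  qed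
qed

lemma bounded_linear_ulact_right: "bounded_linear (ulact u)"
proof -
  obtain K where K: "1 \<le> K"
    "\<And>u x. norm (ulact u x) \<le> K * unorm u * norm x" "\<And>u x. norm (uract x u) \<le> K * unorm u * norm x"
    using uaction_bound by blast
  show ?thesis
  proof (rule bounded_linear_intro[where K = "K * unorm u"])
    show "norm (ulact u x) \<le> norm x * (K * unorm u)" for x
      using K(2)[of u x] by (simp add: ac_simps)
  qed (simp_all add: ulact_add_right scaleR_scaleC ulact_scaleC_right)
qed

lemma bounded_linear_uract_left: "bounded_linear (\<lambda>x. uract x u)"
proof -
  obtain K where K: "1 \<le> K"
    "\<And>u x. norm (ulact u x) \<le> K * unorm u * norm x" "\<And>u x. norm (uract x u) \<le> K * unorm u * norm x"
    using uaction_bound by blast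
  show ?thesis
  proof (rule bounded_linear_intro[where K = "K * unorm u"])
    show "norm (uract x u) \<le> norm x * (K * unorm u)" for x
      using K(3)[of x u] by (simp add: ac_simps)
  qed (simp_all add: uract_add_left scaleR_scaleC uract_scaleC_left)
qed

lemma bounded_linear_ulact_left: "bounded_linear (\<lambda>u. ulact u x)"
proof -
  obtain K where K: "1 \<le> K"
    "\<And>u x. norm (ulact u x) \<le> K * unorm u * norm x" "\<And>u x. norm (uract x u) \<le> K * unorm u * norm x"
    using uaction_bound by blast
  show ?thesis
  proof (rule bounded_linear_intro[where K = "2 * K * norm x"])
    show "ulact (u + v) x = ulact u x + ulact v x" for u v
      using ulact_uadd[of u v x] by (simp add: uadd_eq_plus)
    show "ulact (r *\<^sub>R u) x = r *\<^sub>R ulact u x" for r u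
      using ulact_uscale[of "of_real r" u x] by (simp add: uscale_of_real scaleR_scaleC)
    show "norm (ulact u x) \<le> norm u * (2 * K * norm x)" for u
    proof -
      have "norm (ulact u x) \<le> K * unorm u * norm x"
        by (rule K(2))
      also have "\<dots> \<le> K * (2 * norm u) * norm x"
        using K(1) unorm_le_norm[of u] by (intro mult_right_mono mult_left_mono) auto
      finally show ?thesis
        by (simp add: ac_simps)
    qed
  qed
qed

lemma norm_ulact_sub_le:
  obtains C where "0 < C"
    "\<And>p x. norm (ulact p x - x) \<le> C * unorm (uadd (umult p (0, 1)) (uneg (0, 1))) * norm x"
proof -
  obtain K where K: "1 \<le> K"
    "\<And>u x. norm (ulact u x) \<le> K * unorm u * norm x" "\<And>u x. norm (uract x u) \<le> K * unorm u * norm x"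
    using uaction_bound by blast
  have "uadd (umult p (0, 1)) (uneg (0, 1)) = (fst p, snd p - 1)" for p :: "'a \<times> complex"
    by (simp add: uadd_def umult_def uneg_def scaleC_one)
  moreover have "ulact p x - x = ulact (fst p, snd p - 1) x" for p x
    by (simp add: ulact_def complex_vector.scale_left_diff_distrib scaleC_one)
  ultimately show thesis
    using K by (intro that[of K]) simp_all
qed

end

section \<open>The defect of a central Jordan derivation\<close>

locale central_jordan_derivation = bimodule lact ract
  for lact :: "'a::complex_normed_algebra \<Rightarrow> 'x::{complex_normed_vector,banach} \<Rightarrow> 'x"
    and ract :: "'x \<Rightarrow> 'a \<Rightarrow> 'x" +
  fixes D :: "'a \<Rightarrow> 'x"
  assumes jordan: "jordan_derivation lact ract D"
    and central: "\<forall>a. D a \<in> centre lact ract"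
begin

lemma D_add: "D (a + b) = D a + D b"
  and D_scaleC: "D (scaleC c a) = scaleC c (D a)"
  using jordan unfolding jordan_derivation_def clinear_def by auto

lemma ract_D: "ract (D a) c = lact c (D a)"
  using central by (simp add: centre_def)

definition defect :: "'a \<Rightarrow> 'a \<Rightarrow> 'x"
  where "defect a b = D (a * b) - lact b (D a) - lact a (D b)"

lemma defect_swap: "defect b a = - defect a b"
proof -
  have "D (a * b) + D (b * a) = lact b (D a) + lact a (D b) + lact a (D b) + lact b (D a)"
    using jordan by (simp add: jordan_derivation_def D_add ract_D)
  then show ?thesis
    by (simp add: defect_def algebra_simps)
qed

lemma defect_add_self: "defect a b + defect a b = D (a * b) - D (b * a)"
proof -
  have "defect a b - defect b a = D (a * b) - D (b * a)"
    by (simp add: defect_def algebra_simps)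
  then show ?thesis
    by (simp add: defect_swap[of b a])
qed

lemma defect_central: "defect a b \<in> centre lact ract"
proof -
  have "D (a * b) - D (b * a) \<in> centre lact ract"
    using central centre_subspace by (simp add: complex_vector.subspace_diff)
  then have "scaleC (of_real (1/2)) (D (a * b) - D (b * a)) \<in> centre lact ract"
    using centre_subspace by (rule complex_vector.subspace_scale[rotated])
  then show ?thesis
    using defect_add_self by (simp add: add_self_eq_iff scaleR_scaleC)
qed

lemma ract_defect: "ract (defect a b) c = lact c (defect a b)"
  using defect_central by (simp add: centre_def)

(* Up to the centrality of D, the defect is the Hochschild coboundary of D. *)
lemma defect_cocycle:
  "lact a (defect b c) - defect (a * b) c + defect a (b * c) - ract (defect a b) c = 0"
  by (simp add: defect_def action_simps ract_D mult.assoc algebra_simps)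

lemma defect_cyclic: "defect (a * b) c + defect (b * c) a + defect (c * a) b = 0"
proof -
  let ?S = "defect (a * b) c + defect (b * c) a + defect (c * a) b"
  have "?S + ?S = (defect (a * b) c + defect (a * b) c) + (defect (b * c) a + defect (b * c) a)
      + (defect (c * a) b + defect (c * a) b)"
    by (simp add: algebra_simps)
  also have "\<dots> = 0"
    by (simp add: defect_add_self mult.assoc)
  finally show ?thesis
    by (simp add: add_self_eq_iff)
qed

lemma defect_mult_left: "defect (c * a) b = ract (defect c b) a + lact c (defect a b)"
proof -
  have "defect (c * a) b = - defect (a * b) c - defect (b * c) a"
    using defect_cyclic[of a b c] by (simp add: algebra_simps eq_neg_iff_add_eq_0)
  also have "\<dots> = defect a (b * c) - defect (a * b) c"
    by (simp add: defect_swap[of "b * c"])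
  also have "\<dots> = ract (defect a b) c - lact a (defect b c)"
    using defect_cocycle[of a b c] by (simp add: algebra_simps)
  also have "\<dots> = ract (defect c b) a + lact c (defect a b)"
    by (simp add: ract_defect defect_swap[of c b] action_simps)
  finally show ?thesis .
qed

lemma derivation_defect: "derivation lact ract (\<lambda>a. defect a b)"
  unfolding derivation_def clinear_def
proof (intro conjI allI)
  show "defect (x + y) b = defect x b + defect y b" for x y
    by (simp add: defect_def distrib_right D_add action_simps algebra_simps)
  show "defect (scaleC c x) b = scaleC c (defect x b)" for c x
    by (simp add: defect_def D_scaleC scaleC_left_mult action_simps complex_vector.scale_right_diff_distrib)
  show "defect (x * y) b = ract (defect x b) y + lact x (defect y b)" for x y
    by (rule defect_mult_left)
qed

lemma cbounded_defect:
  assumes "cbounded D"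
  shows "cbounded (\<lambda>a. defect a b)"
proof -
  obtain KD where KD: "0 \<le> KD" "\<And>x. norm (D x) \<le> KD * norm x"
    using cboundedE[OF assms] by blast
  obtain K where K: "1 \<le> K"
    "\<And>a x. norm (lact a x) \<le> K * norm a * norm x" "\<And>a x. norm (ract x a) \<le> K * norm x * norm a"
    using action_bound by blast
  have "norm (defect x b) \<le> (KD * norm b + K * norm b * KD + K * norm (D b)) * norm x" for x
  proof -
    have "norm (defect x b) \<le> norm (D (x * b)) + norm (lact b (D x)) + norm (lact x (D b))"
      using norm_triangle_ineq4[of "D (x * b) - lact b (D x)" "lact x (D b)"]
        norm_triangle_ineq4[of "D (x * b)" "lact b (D x)"]
      unfolding defect_def by linarith
    also have "\<dots> \<le> KD * (norm x * norm b) + K * norm b * (KD * norm x) + K * norm x * norm (D b)"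
    proof (intro add_mono)
      show "norm (D (x * b)) \<le> KD * (norm x * norm b)"
        using KD(2)[of "x * b"] mult_left_mono[OF norm_mult_ineq[of x b] KD(1)] by linarith
      have "0 \<le> K * norm b"
        using K(1) by simp
      then show "norm (lact b (D x)) \<le> K * norm b * (KD * norm x)"
        using K(2)[of b "D x"] mult_left_mono[OF KD(2)[of x]] by fastforce
      show "norm (lact x (D b)) \<le> K * norm x * norm (D b)"
        by (rule K(2))
    qed
    finally show ?thesis
      by (simp add: algebra_simps)
  qed
  then show ?thesis
    unfolding cbounded_def by blast
qed

lemma derivation_if_defect_eq_0:
  assumes "\<And>a b. defect a b = 0"
  shows "derivation lact ract D"
  unfolding derivation_def
proof (intro conjI allI)
  show "clinear D"
    using jordan by (simp add: jordan_derivation_def)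
  show "D (a * b) = ract (D a) b + lact a (D b)" for a b
    using assms[of a b] by (simp add: defect_def ract_D algebra_simps)
qed

end

section \<open>Bounded central derivations vanish\<close>

lemma net_to_zero_both:
  assumes "directed_set le" "net_to_zero le f" "net_to_zero le g" "0 < e1" "0 < e2"
  obtains i where "\<bar>f i\<bar> < e1" "\<bar>g i\<bar> < e2"
proof -
  obtain i1 where "\<forall>i. le i1 i \<longrightarrow> \<bar>f i\<bar> < e1"
    using assms(2,4) unfolding net_to_zero_def by blast
  moreover obtain i2 where "\<forall>i. le i2 i \<longrightarrow> \<bar>g i\<bar> < e2"
    using assms(3,5) unfolding net_to_zero_def by blast
  moreover obtain k where "le i1 k" "le i2 k"
    using assms(1) unfolding directed_set_def by blast
  ultimately show thesis
    using that[of k] by blast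
qed

locale central_derivation = bimodule lact ract
  for lact :: "'a::{complex_normed_algebra,banach} \<Rightarrow> 'x::{complex_normed_vector,banach} \<Rightarrow> 'x"
    and ract :: "'x \<Rightarrow> 'a \<Rightarrow> 'x" +
  fixes d :: "'a \<Rightarrow> 'x"
  assumes derivation: "derivation lact ract d"
    and bounded: "cbounded d"
    and central: "\<forall>a. d a \<in> centre lact ract"
begin

lemma d_add: "d (a + b) = d a + d b"
  and d_scaleC: "d (scaleC c a) = scaleC c (d a)"
  and d_mult: "d (a * b) = ract (d a) b + lact a (d b)"
  using derivation unfolding derivation_def clinear_def by auto

lemma d_umult: "d (fst (umult u v)) = uract (d (fst u)) v + ulact u (d (fst v))"
  by (simp add: umult_def d_add d_scaleC d_mult ulact_def uract_def algebra_simps)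

definition skew_form :: "'a \<times> complex \<Rightarrow> 'a \<times> complex \<Rightarrow> 'x"
  where "skew_form u v = ulact u (d (fst v)) - uract (d (fst u)) v"

lemma skew_form_swap: "skew_form v u = - skew_form u v"
  using central by (simp add: skew_form_def uract_central)

lemma ubilinear_skew_form: "ubilinear skew_form"
  by (simp add: ubilinear_def skew_form_def uaction_simps d_add d_scaleC
      complex_vector.scale_right_diff_distrib)

lemma bounded_skew_form: "\<exists>K. bounded_ubilinear skew_form K"
proof -
  obtain K where K: "1 \<le> K"
    "\<And>u x. norm (ulact u x) \<le> K * unorm u * norm x" "\<And>u x. norm (uract x u) \<le> K * unorm u * norm x"
    using uaction_bound by blast
  obtain Kd where Kd: "0 \<le> Kd" "\<And>x. norm (d x) \<le> Kd * norm x"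
    using cboundedE[OF bounded] by blast
  have d_fst: "norm (d (fst u)) \<le> (Kd + 1) * unorm u" for u
  proof -
    have "Kd * norm (fst u) \<le> (Kd + 1) * unorm u"
      using Kd(1) by (intro mult_mono) (auto simp: unorm_def)
    then show ?thesis
      using Kd(2)[of "fst u"] by linarith
  qed
  have "norm (skew_form u v) \<le> 2 * K * (Kd + 1) * unorm u * unorm v" for u v
  proof -
    have "norm (skew_form u v) \<le> K * unorm u * norm (d (fst v)) + K * unorm v * norm (d (fst u))"
      using norm_triangle_ineq4[of "ulact u (d (fst v))" "uract (d (fst u)) v"]
        K(2)[of u "d (fst v)"] K(3)[of "d (fst u)" v]
      unfolding skew_form_def by linarith
    also have "\<dots> \<le> K * unorm u * ((Kd + 1) * unorm v) + K * unorm v * ((Kd + 1) * unorm u)"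
      using K(1) d_fst by (intro add_mono mult_left_mono) (auto simp: unorm_nonneg)
    finally show ?thesis
      by (simp add: algebra_simps)
  qed
  moreover have "0 < 2 * K * (Kd + 1)"
    using K(1) Kd(1) by simp
  ultimately show ?thesis
    using ubilinear_skew_form unfolding bounded_ubilinear_def by blast
qed

lemma skew_form_commutator:
  "skew_form (umult a u) v - skew_form u (umult v a)
     = ulact a (skew_form u v) - uract (skew_form u v) a
       - (ulact (umult u v) (d (fst a)) + ulact (umult u v) (d (fst a)))"
proof -
  have "skew_form (umult a u) v - skew_form u (umult v a)
      = ulact a (skew_form u v) - uract (skew_form u v) a
        - uract (d (fst a)) (umult u v) - ulact (umult u v) (d (fst a))"
    by (simp add: skew_form_def d_umult uaction_simps algebra_simps)
  then show ?thesis
    using central by (simp add: uract_central)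
qed

lemma ctensor_eval_skew_form_commutator:
  assumes B: "bounded_ubilinear skew_form K" and m: "ctensor_ok m"
  shows "ctensor_eval skew_form (cdiff (lmod a m) (rmod m a))
    = ulact a (ctensor_eval skew_form m) - uract (ctensor_eval skew_form m) a
      - (ulact (cpi m) (d (fst a)) + ulact (cpi m) (d (fst a)))"
proof -
  let ?b = "\<lambda>n. skew_form (fst (m n)) (snd (m n))"
  let ?p = "\<lambda>n. umult (fst (m n)) (snd (m n))"
  define g where "g u = ulact u (d (fst a)) + ulact u (d (fst a))" for u
  have g: "bounded_linear g"
    unfolding g_def by (intro bounded_linear_add bounded_linear_ulact_left)
  have b: "summable ?b"
    by (rule summable_ctensor_eval[OF B m])
  have p: "summable ?p"
    by (rule summable_cpi_terms[OF m])
  have l: "summable (\<lambda>n. skew_form (umult a (fst (m n))) (snd (m n)))"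
    and r: "summable (\<lambda>n. skew_form (fst (m n)) (umult (snd (m n)) a))"
    using summable_ctensor_eval[OF B ctensor_ok_lmod[OF m], of a]
      summable_ctensor_eval[OF B ctensor_ok_rmod[OF m], of a]
    by (simp_all add: lmod_def rmod_def)
  have "ctensor_eval skew_form (cdiff (lmod a m) (rmod m a))
      = ctensor_eval skew_form (lmod a m) - ctensor_eval skew_form (rmod m a)"
    by (rule ctensor_eval_cdiff[OF B ctensor_ok_lmod[OF m] ctensor_ok_rmod[OF m]])
  also have "\<dots> = (\<Sum>n. skew_form (umult a (fst (m n))) (snd (m n))
      - skew_form (fst (m n)) (umult (snd (m n)) a))"
    using suminf_diff[OF l r] by (simp add: ctensor_eval_def lmod_def rmod_def)
  also have "\<dots> = (\<Sum>n. ulact a (?b n) - uract (?b n) a - g (?p n))"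
    by (simp add: skew_form_commutator g_def)
  also have "\<dots> = (\<Sum>n. ulact a (?b n)) - (\<Sum>n. uract (?b n) a) - (\<Sum>n. g (?p n))"
    using bounded_linear.summable[OF bounded_linear_ulact_right b]
      bounded_linear.summable[OF bounded_linear_uract_left b] bounded_linear.summable[OF g p]
    by (simp add: suminf_diff summable_diff)
  also have "\<dots> = ulact a (ctensor_eval skew_form m) - uract (ctensor_eval skew_form m) a - g (cpi m)"
    unfolding ctensor_eval_def cpi_def
    by (simp add: bounded_linear.suminf[OF bounded_linear_ulact_right b]
        bounded_linear.suminf[OF bounded_linear_uract_left b] bounded_linear.suminf[OF g p])
  finally show ?thesis
    by (simp add: g_def)
qed

lemma norm_cpi_action_le:
  assumes B: "bounded_ubilinear skew_form K" and m: "ctensor_ok m" "csymmetric m"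
  shows "norm (ulact (cpi m) (d (fst a)) + ulact (cpi m) (d (fst a)))
    \<le> K * cnorm (cdiff (lmod a m) (rmod m a))"
proof -
  have "ctensor_eval skew_form m = 0"
    using B m skew_form_swap by (rule ctensor_eval_symmetric_eq_0)
  then have "ctensor_eval skew_form (cdiff (lmod a m) (rmod m a))
      = - (ulact (cpi m) (d (fst a)) + ulact (cpi m) (d (fst a)))"
    by (simp add: ctensor_eval_skew_form_commutator[OF B m(1)] uaction_simps)
  moreover have "norm (ctensor_eval skew_form (cdiff (lmod a m) (rmod m a)))
      \<le> K * cnorm (cdiff (lmod a m) (rmod m a))"
    by (intro norm_ctensor_eval_le[OF B] ctensor_ok_cdiff ctensor_ok_lmod ctensor_ok_rmod m)
  ultimately show ?thesis
    using norm_minus_cancel[of "ulact (cpi m) (d (fst a)) + ulact (cpi m) (d (fst a))"] by simp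
qed

lemma eq_0_if_sym_approx_diag:
  fixes t :: "'i \<Rightarrow> 'a ctensor"
  assumes "sym_approx_diag_unitization le t"
  shows "d x = 0"
proof -
  obtain K where B: "bounded_ubilinear skew_form K"
    using bounded_skew_form by blast
  obtain C where C: "0 < C"
    "\<And>p y. norm (ulact p y - y) \<le> C * unorm (uadd (umult p (0, 1)) (uneg (0, 1))) * norm y"
    using norm_ulact_sub_le by blast
  define a :: "'a \<times> complex" where "a = (x, 0)"
  have dir: "directed_set le" and t: "\<And>i. ctensor_ok (t i)" "\<And>i. csymmetric (t i)"
    and comm: "net_to_zero le (\<lambda>i. cnorm (cdiff (lmod a (t i)) (rmod (t i) a)))"
    and unit: "net_to_zero le (\<lambda>i. unorm (uadd (umult (cpi (t i)) (0, 1)) (uneg (0, 1))))"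
    using assms unfolding sym_approx_diag_unitization_def by blast+
  have "norm (d x) \<le> 0 + e" if "0 < e" for e
  proof -
    have pos: "0 < e / K" "0 < 1 / (2 * C)"
      using \<open>0 < e\<close> C(1) bounded_ubilinearD(2)[OF B] by simp_all
    obtain k where k: "\<bar>cnorm (cdiff (lmod a (t k)) (rmod (t k) a))\<bar> < e / K"
      "\<bar>unorm (uadd (umult (cpi (t k)) (0, 1)) (uneg (0, 1)))\<bar> < 1 / (2 * C)"
      using net_to_zero_both[OF dir comm unit pos] by blast
    define y where "y = ulact (cpi (t k)) (d x)"
    have "norm (y - d x) \<le> C * unorm (uadd (umult (cpi (t k)) (0, 1)) (uneg (0, 1))) * norm (d x)"
      unfolding y_def by (rule C(2))
    also have "\<dots> \<le> C * (1 / (2 * C)) * norm (d x)"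
      using k(2) C(1) by (intro mult_right_mono mult_left_mono) auto
    also have "\<dots> = norm (d x) / 2"
      using C(1) by simp
    finally have "norm (d x) \<le> norm (y + y)"
      by (rule norm_le_norm_add_self)
    also have "\<dots> \<le> K * cnorm (cdiff (lmod a (t k)) (rmod (t k) a))"
      using norm_cpi_action_le[OF B t(1)[of k] t(2)[of k], of a] by (simp add: y_def a_def)
    also have "\<dots> \<le> K * (e / K)"
      using k(1) bounded_ubilinearD(2)[OF B] by (intro mult_left_mono) auto
    also have "\<dots> = e"
      using bounded_ubilinearD(2)[OF B] by simp
    finally show ?thesis
      by simp
  qed
  then show ?thesis
    using field_le_epsilon[of "norm (d x)" 0] by simp
qed

end

theorem theorem5p3:
  fixes le :: "'i \<Rightarrow> 'i \<Rightarrow> bool"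
    and t :: "'i \<Rightarrow> 'a::{complex_normed_algebra, banach} ctensor"
    and lact :: "'a \<Rightarrow> 'x::{complex_normed_vector, banach} \<Rightarrow> 'x"
    and ract :: "'x \<Rightarrow> 'a \<Rightarrow> 'x"
    and D :: "'a \<Rightarrow> 'x"
  assumes "sym_approx_diag_unitization le t"
    and "banach_bimodule lact ract"
    and "jordan_derivation lact ract D"
    and "cbounded D"
    and "\<forall>a. D a \<in> centre lact ract"
  shows "derivation lact ract D"
proof -
  interpret central_jordan_derivation lact ract D
    using assms(2,3,5) by unfold_locales
  have "defect a b = 0" for a b
  proof -
    interpret d: central_derivation lact ract "\<lambda>a. defect a b"
      using derivation_defect cbounded_defect[OF assms(4)] defect_central by unfold_locales auto
    show ?thesis
      using d.eq_0_if_sym_approx_diag[OF assms(1)] .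
  qed
  then show ?thesis
    by (rule derivation_if_defect_eq_0)
qed

end
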